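(* Let $\Sigma$ be an alphabet, $L$ a finite language and $L'$ a regular language over $\Sigma$. Then (a) $\mathrm{rpn}(L) \geq \mathrm{rpn}(\overline{L})$ and $\mathrm{rpn}(L') \geq \mathrm{rpn}(\underline{L'})$; (b) for every weighting $\mu : \Sigma \to \mathbb{R}_{\geq 0}$, $\mathrm{rpn}(L)\geq \mathrm{rpn}(\overline{L}^{\mu})$ and $\mathrm{rpn}(L')\geq \mathrm{rpn}(\underline{L'}_{\mu})$.
   Context: Regular expressions are built from $\epsilon$ and letters by union, concatenation and star (no $\emptyset$); $\mathrm{rpn}(L)$ is the minimum number of syntax-tree nodes of an expression describing $L$. The lower envelope $\underline{L'}$ is the set of words of minimal length in $L'$; for finite $L$ the higher envelope $\overline{L}$ is the set of words of maximal length in $L$. For a weighting $\mu$, the weight of $w=w_1\cdots w_n$ is $\mu(w)=\sum_i\mu(w_i)$; $\underline{L'}_{\mu}$ is the set of words of minimal weight in $L'$ and, for finite $L$, $\overline{L}^{\mu}$ is the set of words of maximal weight in $L$. Languages are assumed nonempty and different from $\{\epsilon\}$. *)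

theory Defs
  imports Main "HOL-Library.Extended_Nat" Complex_Main
begin

datatype 'a rexp = Eps | Sym 'a | Plus "'a rexp" "'a rexp" | Times "'a rexp" "'a rexp" | Star "'a rexp"

definition conc :: "'a list set \<Rightarrow> 'a list set \<Rightarrow> 'a list set" where
  "conc A B = {u @ v | u v. u \<in> A \<and> v \<in> B}"

inductive_set star_lang :: "'a list set \<Rightarrow> 'a list set" for A where
  star_nil: "[] \<in> star_lang A"
| star_app: "u \<in> A \<Longrightarrow> v \<in> star_lang A \<Longrightarrow> u @ v \<in> star_lang A"

fun lang :: "'a rexp \<Rightarrow> 'a list set" where
  "lang Eps = {[]}"
| "lang (Sym a) = {[a]}"
| "lang (Plus r s) = lang r \<union> lang s"
| "lang (Times r s) = conc (lang r) (lang s)"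
| "lang (Star r) = star_lang (lang r)"

fun nodes :: "'a rexp \<Rightarrow> nat" where
  "nodes Eps = 1"
| "nodes (Sym a) = 1"
| "nodes (Plus r s) = 1 + nodes r + nodes s"
| "nodes (Times r s) = 1 + nodes r + nodes s"
| "nodes (Star r) = 1 + nodes r"

fun letters :: "'a rexp \<Rightarrow> 'a set" where
  "letters Eps = {}"
| "letters (Sym a) = {a}"
| "letters (Plus r s) = letters r \<union> letters s"
| "letters (Times r s) = letters r \<union> letters s"
| "letters (Star r) = letters r"

definition regular :: "'a set \<Rightarrow> 'a list set \<Rightarrow> bool" where
  "regular \<Sigma> L \<longleftrightarrow> (\<exists>r. letters r \<subseteq> \<Sigma> \<and> lang r = L)"

(* reverse polish notation length: minimal number of syntax-tree nodes of an
   expression over \<Sigma> describing L *)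
definition rpn :: "'a set \<Rightarrow> 'a list set \<Rightarrow> nat" where
  "rpn \<Sigma> L = (LEAST n. \<exists>r. letters r \<subseteq> \<Sigma> \<and> lang r = L \<and> nodes r = n)"

definition weight :: "('a \<Rightarrow> real) \<Rightarrow> 'a list \<Rightarrow> real" where
  "weight \<mu> w = (\<Sum>i<length w. \<mu> (w ! i))"

definition lower_env :: "'a list set \<Rightarrow> 'a list set" where
  "lower_env L = {w \<in> L. \<forall>v \<in> L. length w \<le> length v}"

definition higher_env :: "'a list set \<Rightarrow> 'a list set" where
  "higher_env L = {w \<in> L. \<forall>v \<in> L. length v \<le> length w}"

definition lower_env_w :: "('a \<Rightarrow> real) \<Rightarrow> 'a list set \<Rightarrow> 'a list set" where
  "lower_env_w \<mu> L = {w \<in> L. \<forall>v \<in> L. weight \<mu> w \<le> weight \<mu> v}"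

definition higher_env_w :: "('a \<Rightarrow> real) \<Rightarrow> 'a list set \<Rightarrow> 'a list set" where
  "higher_env_w \<mu> L = {w \<in> L. \<forall>v \<in> L. weight \<mu> v \<le> weight \<mu> w}"

end

theory Submission
  imports Defs
begin

text \<open>Taking the lower envelope for a weighting commutes with the regular operations: on a
  union it keeps the envelope of one summand or of both, it distributes over concatenation, and
  for nonnegative weights the envelope of a star is either the star of the envelope (minimal
  weight 0) or \<open>{[]}\<close>. So, by induction on an expression, each node can be kept, dropped or
  replaced by \<open>\<epsilon>\<close>, giving an expression of no larger size for the envelope. Nonnegativity is
  only used at stars, and a star with finite language denotes \<open>{[]}\<close>; hence for finite
  languages any weighting works, in particular the negated one, whose lower envelope is the
  higher envelope. Length is the weight of the constant weighting \<open>1\<close>.\<close>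

lemma weight_eq_sum_list: "weight \<mu> w = sum_list (map \<mu> w)"
  unfolding weight_def by (simp add: sum_list_sum_nth atLeast0LessThan)

lemma weight_simps [simp]:
  "weight \<mu> [] = 0"
  "weight \<mu> (a # w) = \<mu> a + weight \<mu> w"
  "weight \<mu> (u @ v) = weight \<mu> u + weight \<mu> v"
  by (simp_all add: weight_eq_sum_list)

lemma weight_nonneg: "set w \<subseteq> S \<Longrightarrow> \<forall>a\<in>S. 0 \<le> \<mu> a \<Longrightarrow> 0 \<le> weight \<mu> w"
  by (induction w) auto

lemma weight_uminus: "weight (\<lambda>a. - \<mu> a) w = - weight \<mu> w"
  by (induction w) auto

lemma weight_one: "weight (\<lambda>_. 1) w = real (length w)"
  by (induction w) auto

lemma higher_env_w_eq_lower_env_w_uminus: "higher_env_w \<mu> L = lower_env_w (\<lambda>a. - \<mu> a) L"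
  unfolding higher_env_w_def lower_env_w_def weight_uminus by auto

lemma higher_env_eq_higher_env_w_one: "higher_env L = higher_env_w (\<lambda>_. 1) L"
  unfolding higher_env_w_def higher_env_def weight_one by auto

lemma lower_env_eq_lower_env_w_one: "lower_env L = lower_env_w (\<lambda>_. 1) L"
  unfolding lower_env_w_def lower_env_def weight_one by auto

lemma star_lang_subset_lists: "w \<in> star_lang A \<Longrightarrow> A \<subseteq> lists S \<Longrightarrow> set w \<subseteq> S"
  by (induction rule: star_lang.induct) auto

lemma star_lang_subset_Nil:
  assumes "A \<subseteq> {[]}"
  shows "star_lang A = {[]}"
proof -
  have "w = []" if "w \<in> star_lang A" for w
    using that assms by (induction rule: star_lang.induct) auto
  then show ?thesis
    using star_lang.star_nil by blast
qed

lemma concat_replicate_in_star_lang: "u \<in> A \<Longrightarrow> concat (replicate n u) \<in> star_lang A"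
  by (induction n) (auto intro: star_lang.intros)

lemma finite_star_lang_imp_subset_Nil: "finite (star_lang A) \<Longrightarrow> A \<subseteq> {[]}"
proof (rule ccontr)
  assume fin: "finite (star_lang A)" and "\<not> A \<subseteq> {[]}"
  then obtain u where u: "u \<in> A" "u \<noteq> []" by auto
  have "inj (\<lambda>n. concat (replicate n u))"
  proof (rule injI)
    fix m n assume "concat (replicate m u) = concat (replicate n u)"
    moreover have "length (concat (replicate k u)) = k * length u" for k
      by (simp add: length_concat sum_list_replicate)
    ultimately show "m = n"
      using u(2) by (metis length_0_conv mult_right_cancel)
  qed
  moreover have "range (\<lambda>n. concat (replicate n u)) \<subseteq> star_lang A"
    using concat_replicate_in_star_lang[OF u(1)] by auto
  ultimately show False
    using fin by (meson finite_imageD finite_subset infinite_UNIV_nat)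
qed

lemma finite_conc_imp_finite:
  assumes "finite (conc A B)" "A \<noteq> {}" "B \<noteq> {}"
  shows "finite A" "finite B"
proof -
  obtain a b where "a \<in> A" "b \<in> B" using assms(2,3) by blast
  then have "(\<lambda>u. u @ b) ` A \<subseteq> conc A B" "(\<lambda>v. a @ v) ` B \<subseteq> conc A B"
    by (auto simp: conc_def)
  then have "finite ((\<lambda>u. u @ b) ` A)" "finite ((\<lambda>v. a @ v) ` B)"
    using assms(1) finite_subset by blast+
  moreover have "inj_on (\<lambda>u. u @ b) A" "inj_on (\<lambda>v. a @ v) B"
    by (auto intro: inj_onI)
  ultimately show "finite A" "finite B"
    using finite_imageD by blast+
qed

lemma lang_nonempty: "lang r \<noteq> {}"
  by (induction r) (auto simp: conc_def intro: star_lang.star_nil)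

lemma set_subset_letters_if_in_lang: "w \<in> lang r \<Longrightarrow> set w \<subseteq> letters r"
proof (induction r arbitrary: w)
  case (Times r s) then show ?case by (fastforce simp: conc_def)
next
  case (Star r)
  have "lang r \<subseteq> lists (letters r)" using Star.IH by auto
  then show ?case using Star.prems star_lang_subset_lists[of w "lang r" "letters r"] by auto
qed auto

lemma lower_env_w_singleton: "lower_env_w \<mu> {w} = {w}"
  unfolding lower_env_w_def by auto

lemma lower_env_w_eq:
  "a \<in> lower_env_w \<mu> A \<Longrightarrow> lower_env_w \<mu> A = {w \<in> A. weight \<mu> w = weight \<mu> a}"
  unfolding lower_env_w_def by (auto intro: order.antisym order.trans)

lemma lower_env_w_union:
  assumes "a \<in> lower_env_w \<mu> A" "b \<in> lower_env_w \<mu> B"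
  shows "lower_env_w \<mu> (A \<union> B) =
    (if weight \<mu> a < weight \<mu> b then lower_env_w \<mu> A
     else if weight \<mu> b < weight \<mu> a then lower_env_w \<mu> B
     else lower_env_w \<mu> A \<union> lower_env_w \<mu> B)"
proof -
  have a: "a \<in> A" "\<And>v. v \<in> A \<Longrightarrow> weight \<mu> a \<le> weight \<mu> v"
    and b: "b \<in> B" "\<And>v. v \<in> B \<Longrightarrow> weight \<mu> b \<le> weight \<mu> v"
    using assms unfolding lower_env_w_def by auto
  obtain c where c: "c \<in> lower_env_w \<mu> (A \<union> B)"
    "weight \<mu> c = min (weight \<mu> a) (weight \<mu> b)"
  proof (cases "weight \<mu> a \<le> weight \<mu> b")
    case True
    then show ?thesis using that[of a] a b unfolding lower_env_w_def by force
  next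
    case False
    then show ?thesis using that[of b] a b unfolding lower_env_w_def by force
  qed
  have "weight \<mu> w \<noteq> weight \<mu> a" if "weight \<mu> a < weight \<mu> b" "w \<in> B" for w
    using b(2)[OF that(2)] that(1) by linarith
  moreover have "weight \<mu> w \<noteq> weight \<mu> b" if "weight \<mu> b < weight \<mu> a" "w \<in> A" for w
    using a(2)[OF that(2)] that(1) by linarith
  ultimately show ?thesis
    unfolding lower_env_w_eq[OF c(1)] lower_env_w_eq[OF assms(1)] lower_env_w_eq[OF assms(2)] c(2)
    by (auto simp: min_def)
qed

lemma lower_env_w_conc:
  assumes "a \<in> lower_env_w \<mu> A" "b \<in> lower_env_w \<mu> B"
  shows "lower_env_w \<mu> (conc A B) = conc (lower_env_w \<mu> A) (lower_env_w \<mu> B)"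
proof -
  have a: "a \<in> A" "\<And>v. v \<in> A \<Longrightarrow> weight \<mu> a \<le> weight \<mu> v"
    and b: "b \<in> B" "\<And>v. v \<in> B \<Longrightarrow> weight \<mu> b \<le> weight \<mu> v"
    using assms unfolding lower_env_w_def by auto
  have ab: "a @ b \<in> lower_env_w \<mu> (conc A B)"
    using a add_mono[OF a(2) b(2)] b unfolding lower_env_w_def conc_def by auto
  have "weight \<mu> u = weight \<mu> a \<and> weight \<mu> v = weight \<mu> b"
    if "u \<in> A" "v \<in> B" "weight \<mu> u + weight \<mu> v = weight \<mu> a + weight \<mu> b" for u v
    using a(2)[OF that(1)] b(2)[OF that(2)] that(3) by linarith
  then show ?thesis
    unfolding lower_env_w_eq[OF ab] lower_env_w_eq[OF assms(1)] lower_env_w_eq[OF assms(2)]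
    by (fastforce simp: conc_def)
qed

lemma star_lang_weight_nonneg:
  "w \<in> star_lang A \<Longrightarrow> \<forall>u\<in>A. 0 \<le> weight \<mu> u \<Longrightarrow> 0 \<le> weight \<mu> w"
  by (induction rule: star_lang.induct) auto

lemma star_lang_weight_zero:
  assumes "\<forall>u\<in>A. 0 \<le> weight \<mu> u"
  shows "{w \<in> star_lang A. weight \<mu> w = 0} = star_lang {u \<in> A. weight \<mu> u = 0}"
proof (intro equalityI subsetI)
  fix w assume "w \<in> {w \<in> star_lang A. weight \<mu> w = 0}"
  then have "w \<in> star_lang A" "weight \<mu> w = 0" by auto
  then show "w \<in> star_lang {u \<in> A. weight \<mu> u = 0}"
  proof (induction rule: star_lang.induct)
    case (star_app u v)
    have "0 \<le> weight \<mu> u" "0 \<le> weight \<mu> v"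
      using star_app.hyps assms star_lang_weight_nonneg by auto
    then show ?case
      using star_app by (auto intro: star_lang.star_app)
  qed (rule star_lang.star_nil)
next
  fix w assume "w \<in> star_lang {u \<in> A. weight \<mu> u = 0}"
  then show "w \<in> {w \<in> star_lang A. weight \<mu> w = 0}"
    by (induction rule: star_lang.induct) (auto intro: star_lang.intros)
qed

lemma lower_env_w_star_lang:
  assumes "a \<in> lower_env_w \<mu> A" "\<forall>u\<in>A. 0 \<le> weight \<mu> u"
  shows "lower_env_w \<mu> (star_lang A) =
    (if weight \<mu> a = 0 then star_lang (lower_env_w \<mu> A) else {[]})"
proof -
  have "[] \<in> lower_env_w \<mu> (star_lang A)"
    using assms(2) star_lang_weight_nonneg
    unfolding lower_env_w_def by (auto intro: star_lang.star_nil)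
  then have "lower_env_w \<mu> (star_lang A) = star_lang {u \<in> A. weight \<mu> u = 0}"
    using lower_env_w_eq star_lang_weight_zero[OF assms(2)] by fastforce
  moreover have "{u \<in> A. weight \<mu> u = 0} = (if weight \<mu> a = 0 then lower_env_w \<mu> A else {})"
    using assms unfolding lower_env_w_eq[OF assms(1)] lower_env_w_def by force
  ultimately show ?thesis
    by (simp add: star_lang_subset_Nil)
qed

lemma rexp_for_lower_env_w:
  "finite (lang r) \<or> (\<forall>a\<in>letters r. 0 \<le> \<mu> a) \<Longrightarrow>
   \<exists>r'. nodes r' \<le> nodes r \<and> letters r' \<subseteq> letters r \<and> lang r' = lower_env_w \<mu> (lang r)"
proof (induction r)
  case Eps
  then show ?case by (intro exI[of _ Eps]) (simp add: lower_env_w_singleton)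
next
  case (Sym x)
  then show ?case by (intro exI[of _ "Sym x"]) (simp add: lower_env_w_singleton)
next
  case (Plus r s)
  obtain r' s' where r': "nodes r' \<le> nodes r" "letters r' \<subseteq> letters r" "lang r' = lower_env_w \<mu> (lang r)"
    and s': "nodes s' \<le> nodes s" "letters s' \<subseteq> letters s" "lang s' = lower_env_w \<mu> (lang s)"
    using Plus by auto
  obtain a b where a: "a \<in> lang r'" and b: "b \<in> lang s'"
    using lang_nonempty by blast
  show ?case
    using r' s' lower_env_w_union[of a \<mu> "lang r" b "lang s"] a b
    by (intro exI[of _ "if weight \<mu> a < weight \<mu> b then r'
      else if weight \<mu> b < weight \<mu> a then s' else Plus r' s'"]) auto
next
  case (Times r s)
  have "finite (lang r) \<or> (\<forall>a\<in>letters r. 0 \<le> \<mu> a)" "finite (lang s) \<or> (\<forall>a\<in>letters s. 0 \<le> \<mu> a)"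
    using Times.prems finite_conc_imp_finite[of "lang r" "lang s"] lang_nonempty by auto
  then obtain r' s' where r': "nodes r' \<le> nodes r" "letters r' \<subseteq> letters r" "lang r' = lower_env_w \<mu> (lang r)"
    and s': "nodes s' \<le> nodes s" "letters s' \<subseteq> letters s" "lang s' = lower_env_w \<mu> (lang s)"
    using Times.IH by blast
  obtain a b where "a \<in> lang r'" "b \<in> lang s'"
    using lang_nonempty by blast
  then show ?case
    using r' s' lower_env_w_conc[of a \<mu> "lang r" b "lang s"]
    by (intro exI[of _ "Times r' s'"]) auto
next
  case (Star r)
  show ?case
  proof (cases "finite (lang (Star r))")
    case True
    then have "lang r \<subseteq> {[]}"
      using finite_star_lang_imp_subset_Nil by simp
    then have "lang (Star r) = {[]}"
      by (simp add: star_lang_subset_Nil)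
    then show ?thesis by (intro exI[of _ Eps]) (simp add: lower_env_w_singleton)
  next
    case False
    then have "\<forall>a\<in>letters r. 0 \<le> \<mu> a" using Star.prems by simp
    then have nonneg: "\<forall>u\<in>lang r. 0 \<le> weight \<mu> u"
      by (metis set_subset_letters_if_in_lang weight_nonneg)
    obtain r' where r': "nodes r' \<le> nodes r" "letters r' \<subseteq> letters r" "lang r' = lower_env_w \<mu> (lang r)"
      using Star.IH False Star.prems by auto
    obtain a where "a \<in> lower_env_w \<mu> (lang r)"
      using lang_nonempty[of r'] r'(3) by auto
    from lower_env_w_star_lang[OF this nonneg] r'
    show ?thesis
      by (intro exI[of _ "if weight \<mu> a = 0 then Star r' else Eps"]) simp
  qed
qed

fun word_rexp :: "'a list \<Rightarrow> 'a rexp" where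
  "word_rexp [] = Eps"
| "word_rexp (a # w) = Times (Sym a) (word_rexp w)"

lemma lang_word_rexp: "lang (word_rexp w) = {w}"
  by (induction w) (auto simp: conc_def)

lemma letters_word_rexp: "letters (word_rexp w) = set w"
  by (induction w) auto

lemma finite_imp_regular:
  "finite L \<Longrightarrow> L \<noteq> {} \<Longrightarrow> L \<subseteq> lists \<Sigma> \<Longrightarrow> regular \<Sigma> L"
proof (induction L rule: finite_ne_induct)
  case (singleton w)
  then show ?case
    unfolding regular_def by (intro exI[of _ "word_rexp w"]) (auto simp: lang_word_rexp letters_word_rexp)
next
  case (insert w L)
  then obtain r where "letters r \<subseteq> \<Sigma>" "lang r = L" unfolding regular_def by auto
  with insert.prems show ?case
    unfolding regular_def
    by (intro exI[of _ "Plus (word_rexp w) r"]) (auto simp: lang_word_rexp letters_word_rexp)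
qed

lemma rpn_attained:
  "regular \<Sigma> L \<Longrightarrow> \<exists>r. letters r \<subseteq> \<Sigma> \<and> lang r = L \<and> nodes r = rpn \<Sigma> L"
  unfolding regular_def rpn_def by (rule LeastI_ex) blast

lemma rpn_le_nodes: "letters r \<subseteq> \<Sigma> \<Longrightarrow> rpn \<Sigma> (lang r) \<le> nodes r"
  unfolding rpn_def by (rule Least_le) blast

lemma rpn_lower_env_w_le:
  assumes "regular \<Sigma> L" "finite L \<or> (\<forall>a\<in>\<Sigma>. 0 \<le> \<mu> a)"
  shows "rpn \<Sigma> (lower_env_w \<mu> L) \<le> rpn \<Sigma> L"
proof -
  obtain r where r: "letters r \<subseteq> \<Sigma>" "lang r = L" "nodes r = rpn \<Sigma> L"
    using rpn_attained[OF assms(1)] by blast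
  then obtain r' where "nodes r' \<le> nodes r" "letters r' \<subseteq> letters r" "lang r' = lower_env_w \<mu> L"
    using rexp_for_lower_env_w[of r \<mu>] assms(2) by auto
  then show ?thesis
    using r rpn_le_nodes[of r' \<Sigma>] by force
qed

lemma rpn_higher_env_w_le:
  "regular \<Sigma> L \<Longrightarrow> finite L \<Longrightarrow> rpn \<Sigma> (higher_env_w \<mu> L) \<le> rpn \<Sigma> L"
  unfolding higher_env_w_eq_lower_env_w_uminus by (simp add: rpn_lower_env_w_le)

theorem lemma8p1:
  fixes \<Sigma> :: "'a set" and L L' :: "'a list set"
  assumes "finite \<Sigma>" "\<Sigma> \<noteq> {}"
    and "finite L" "L \<subseteq> lists \<Sigma>" "L \<noteq> {}" "L \<noteq> {[]}"
    and "regular \<Sigma> L'" "L' \<noteq> {}" "L' \<noteq> {[]}"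
  shows "rpn \<Sigma> L \<ge> rpn \<Sigma> (higher_env L) \<and> rpn \<Sigma> L' \<ge> rpn \<Sigma> (lower_env L')
    \<and> (\<forall>\<mu>::'a \<Rightarrow> real. (\<forall>a\<in>\<Sigma>. \<mu> a \<ge> 0) \<longrightarrow>
         rpn \<Sigma> L \<ge> rpn \<Sigma> (higher_env_w \<mu> L) \<and> rpn \<Sigma> L' \<ge> rpn \<Sigma> (lower_env_w \<mu> L'))"
proof -
  have "regular \<Sigma> L"
    using assms(3-5) by (simp add: finite_imp_regular)
  then have higher: "rpn \<Sigma> (higher_env_w \<mu> L) \<le> rpn \<Sigma> L" for \<mu>
    using assms(3) by (rule rpn_higher_env_w_le)
  have lower: "rpn \<Sigma> (lower_env_w \<mu> L') \<le> rpn \<Sigma> L'" if "\<forall>a\<in>\<Sigma>. 0 \<le> \<mu> a" for \<mu>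
    using assms(7) that by (blast intro: rpn_lower_env_w_le)
  show ?thesis
    unfolding higher_env_eq_higher_env_w_one lower_env_eq_lower_env_w_one
    using higher lower[of "\<lambda>_. 1"] lower by simp
qed

end
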